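(* For every $\epsilon>0$ there is an instance with uniform weights on which $$\mathrm{opt}_M\text{-}\mathrm{MAX}=\mathrm{opt}_M\text{-}\mathrm{SUM}\ \ge\ (2-\epsilon)\,\mathrm{opt}\text{-}\mathrm{MAX}=(2-\epsilon)\,\mathrm{opt}\text{-}\mathrm{SUM}.$$
   Context: An instance consists of a finite set $E$ of $n$ elements and $m$ tests, test $i$ being a subset $s_i\subseteq E$, with element weights $p_e$; uniform weights mean $p_e=1/n$ for SUM objectives and $p_e=1$ for MAX objectives. A schedule is an infinite test sequence; stochastic schedules choose $\sigma_t$ randomly depending on the past; memoryless schedules draw each $\sigma_t$ i.i.d. from a distribution $q$ on tests. Detection time $T(e,t)=\mathbb{E}[1+\min\{h\ge0:e\in s_{\sigma_{t+h}}\}]$, $E_t[e]=\lim_H\frac1H\sum_{t\le H}T(e,t)$; valid schedules have $\sup_tT(e,t)<\infty$, $E_t[e]$ existing for all $e$, and convergent test frequencies. $\mathrm{opt}\text{-}\mathrm{SUM}$, $\mathrm{opt}\text{-}\mathrm{MAX}$: infima over valid stochastic schedules of $\sum_ep_eE_t[e]$ and $\max_ep_eE_t[e]$ respectively; $\mathrm{opt}_M\text{-}\mathrm{SUM}$, $\mathrm{opt}_M\text{-}\mathrm{MAX}$: the same infima over memoryless schedules. *)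

theory Defs
  imports "HOL-Probability.Probability"
begin

definition is_instance :: "nat \<Rightarrow> nat \<Rightarrow> (nat \<Rightarrow> nat set) \<Rightarrow> bool" where
  "is_instance n m s \<longleftrightarrow> 0 < n \<and> (\<forall>i<m. s i \<subseteq> {..<n})"

text \<open>Space of test sequences (sigma_t = omega t).\<close>
definition seq_space :: "(nat \<Rightarrow> nat) measure" where
  "seq_space = PiM UNIV (\<lambda>_. count_space (UNIV :: nat set))"

definition stoch_schedule :: "nat \<Rightarrow> (nat \<Rightarrow> nat) measure \<Rightarrow> bool" where
  "stoch_schedule m M \<longleftrightarrow> prob_space M \<and> sets M = sets seq_space \<and>
     (AE \<omega> in M. \<forall>t. \<omega> t < m)"

definition memoryless_schedule :: "nat \<Rightarrow> (nat \<Rightarrow> nat) measure \<Rightarrow> bool" where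
  "memoryless_schedule m M \<longleftrightarrow>
     (\<exists>q :: nat pmf. set_pmf q \<subseteq> {..<m} \<and> M = PiM UNIV (\<lambda>_. measure_pmf q))"

definition hit_time :: "(nat \<Rightarrow> nat set) \<Rightarrow> nat \<Rightarrow> nat \<Rightarrow> (nat \<Rightarrow> nat) \<Rightarrow> ennreal" where
  "hit_time s e t \<omega> =
     (if \<exists>h. e \<in> s (\<omega> (t + h)) then of_nat (Suc (LEAST h. e \<in> s (\<omega> (t + h)))) else \<infinity>)"

definition det_time :: "(nat \<Rightarrow> nat set) \<Rightarrow> (nat \<Rightarrow> nat) measure \<Rightarrow> nat \<Rightarrow> nat \<Rightarrow> ennreal" where
  "det_time s M e t = (\<integral>\<^sup>+ \<omega>. hit_time s e t \<omega> \<partial>M)"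

definition avg_det_seq :: "(nat \<Rightarrow> nat set) \<Rightarrow> (nat \<Rightarrow> nat) measure \<Rightarrow> nat \<Rightarrow> nat \<Rightarrow> real" where
  "avg_det_seq s M e H = (\<Sum>t<H. enn2real (det_time s M e t)) / real H"

definition Et :: "(nat \<Rightarrow> nat set) \<Rightarrow> (nat \<Rightarrow> nat) measure \<Rightarrow> nat \<Rightarrow> real" where
  "Et s M e = lim (avg_det_seq s M e)"

definition test_freq_seq :: "(nat \<Rightarrow> nat) measure \<Rightarrow> nat \<Rightarrow> nat \<Rightarrow> real" where
  "test_freq_seq M i H = (\<Sum>t<H. measure M {\<omega> \<in> space M. \<omega> t = i}) / real H"

definition valid_schedule :: "nat \<Rightarrow> nat \<Rightarrow> (nat \<Rightarrow> nat set) \<Rightarrow> (nat \<Rightarrow> nat) measure \<Rightarrow> bool" where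
  "valid_schedule n m s M \<longleftrightarrow> stoch_schedule m M \<and>
     (\<forall>e<n. (\<exists>B::real. \<forall>t. det_time s M e t \<le> ennreal B) \<and> convergent (avg_det_seq s M e)) \<and>
     (\<forall>i<m. convergent (test_freq_seq M i))"

text \<open>Objectives with uniform weights: p_e = 1/n for SUM, p_e = 1 for MAX.\<close>
definition sum_obj :: "nat \<Rightarrow> (nat \<Rightarrow> nat set) \<Rightarrow> (nat \<Rightarrow> nat) measure \<Rightarrow> real" where
  "sum_obj n s M = (\<Sum>e<n. (1 / real n) * Et s M e)"

definition max_obj :: "nat \<Rightarrow> (nat \<Rightarrow> nat set) \<Rightarrow> (nat \<Rightarrow> nat) measure \<Rightarrow> real" where
  "max_obj n s M = Max ((\<lambda>e. Et s M e) ` {..<n})"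

definition opt_SUM :: "nat \<Rightarrow> nat \<Rightarrow> (nat \<Rightarrow> nat set) \<Rightarrow> ereal" where
  "opt_SUM n m s = Inf {ereal (sum_obj n s M) | M. valid_schedule n m s M}"

definition opt_MAX :: "nat \<Rightarrow> nat \<Rightarrow> (nat \<Rightarrow> nat set) \<Rightarrow> ereal" where
  "opt_MAX n m s = Inf {ereal (max_obj n s M) | M. valid_schedule n m s M}"

definition optM_SUM :: "nat \<Rightarrow> nat \<Rightarrow> (nat \<Rightarrow> nat set) \<Rightarrow> ereal" where
  "optM_SUM n m s = Inf {ereal (sum_obj n s M) | M. memoryless_schedule m M \<and> valid_schedule n m s M}"

definition optM_MAX :: "nat \<Rightarrow> nat \<Rightarrow> (nat \<Rightarrow> nat set) \<Rightarrow> ereal" where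
  "optM_MAX n m s = Inf {ereal (max_obj n s M) | M. memoryless_schedule m M \<and> valid_schedule n m s M}"

end

theory Submission
  imports Defs
begin

text \<open>
  Take \<open>k\<close> elements and the \<open>k\<close> singleton tests. Since one element is tested per step,
  the \<open>k\<close> elements are first detected after time \<open>t\<close> at pairwise different times, so their
  detection times add up to at least \<open>1 + 2 + \<dots> + k\<close>: every valid schedule has SUM, and a
  fortiori MAX, at least \<open>(k + 1)/2\<close>, which the cyclic schedule started at a uniformly random
  phase attains for every element. A memoryless schedule drawing test \<open>e\<close> with probability
  \<open>q e\<close> detects \<open>e\<close> after a geometric time of mean \<open>1 / q e\<close>, and \<open>\<Sum> 1 / q e \<ge> k\<^sup>2\<close>
  when \<open>\<Sum> q e \<le> 1\<close>, with equality for the uniform \<open>q\<close>. So the memoryless optima are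
  \<open>k\<close>, the unrestricted ones \<open>(k + 1)/2\<close>, and \<open>k \<ge> (2 - \<epsilon>)(k + 1)/2\<close> once \<open>k \<ge> 2/\<epsilon>\<close>.
\<close>

section \<open>Hitting times\<close>

lemma space_seq_space [simp]: "space seq_space = UNIV"
  unfolding seq_space_def by (simp add: space_PiM)

lemma suminf_one_ennreal: "(\<Sum>j. 1 :: ennreal) = \<top>"
  using summable_iff_suminf_neq_top[of "\<lambda>_. 1"] by (simp add: summable_const_iff)

lemma hit_time_eqI:
  assumes "e \<in> s (\<omega> (t + h))" and "\<And>i. i < h \<Longrightarrow> e \<notin> s (\<omega> (t + i))"
  shows "hit_time s e t \<omega> = of_nat (Suc h)"
proof -
  have "(LEAST h. e \<in> s (\<omega> (t + h))) = h"
    using assms by (intro Least_equality) (auto simp: not_less[symmetric])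
  then show ?thesis
    using assms(1) unfolding hit_time_def by auto
qed

lemma hit_time_eq_suminf:
  "hit_time s e t \<omega> = (\<Sum>j. indicator {\<omega>. \<forall>i<j. e \<notin> s (\<omega> (t + i))} \<omega> :: ennreal)"
proof (cases "\<exists>h. e \<in> s (\<omega> (t + h))")
  case True
  define h where "h = (LEAST h. e \<in> s (\<omega> (t + h)))"
  have hit: "e \<in> s (\<omega> (t + h))" and before: "\<And>i. i < h \<Longrightarrow> e \<notin> s (\<omega> (t + i))"
    unfolding h_def using True by (auto intro: LeastI_ex dest: not_less_Least)
  have "indicator {\<omega>. \<forall>i<j. e \<notin> s (\<omega> (t + i))} \<omega> = (if j \<le> h then 1 else (0 :: ennreal))" for j
    using hit before by (auto simp: indicator_def not_le)
  then have "(\<Sum>j. indicator {\<omega>. \<forall>i<j. e \<notin> s (\<omega> (t + i))} \<omega> :: ennreal) = (\<Sum>j\<le>h. 1)"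
    by (subst suminf_finite[where N="{..h}"]) auto
  then show ?thesis
    using hit_time_eqI[of e s \<omega> t h] hit before by simp
next
  case False
  then show ?thesis
    by (simp add: hit_time_def indicator_def suminf_one_ennreal)
qed

lemma measurable_hit_time [measurable]:
  assumes "sets M = sets seq_space"
  shows "hit_time s e t \<in> borel_measurable M"
proof -
  have "(\<lambda>\<omega>. \<Sum>j. indicator {\<omega>. \<forall>i<j. e \<notin> s (\<omega> (t + i))} \<omega> :: ennreal) \<in> borel_measurable seq_space"
    unfolding seq_space_def by measurable
  then show ?thesis
    unfolding hit_time_eq_suminf[abs_def] using assms measurable_cong_sets by blast
qed

lemma
  assumes "\<And>t. det_time s M e t = ennreal c" and "0 \<le> c"
  shows convergent_avg_det_seq_const: "convergent (avg_det_seq s M e)"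
    and Et_const: "Et s M e = c"
proof -
  have "\<forall>\<^sub>F H in sequentially. c = avg_det_seq s M e H"
    unfolding eventually_sequentially by (auto simp: avg_det_seq_def assms)
  then have "avg_det_seq s M e \<longlonglongrightarrow> c"
    by (rule Lim_transform_eventually[OF tendsto_const])
  then show "convergent (avg_det_seq s M e)" and "Et s M e = c"
    unfolding Et_def by (auto simp: convergent_def intro: limI)
qed

lemma convergent_test_freq_seq_const:
  assumes "\<And>t. measure M {\<omega> \<in> space M. \<omega> t = i} = c"
  shows "convergent (test_freq_seq M i)"
proof -
  have "\<forall>\<^sub>F H in sequentially. c = test_freq_seq M i H"
    unfolding eventually_sequentially by (auto simp: test_freq_seq_def assms)
  then have "test_freq_seq M i \<longlonglongrightarrow> c"
    by (rule Lim_transform_eventually[OF tendsto_const])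
  then show ?thesis
    unfolding convergent_def by blast
qed

lemma det_time_less_top:
  assumes "valid_schedule n m s M" and "e < n"
  shows "det_time s M e t < \<top>"
proof -
  obtain B :: real where "\<forall>t. det_time s M e t \<le> ennreal B"
    using assms unfolding valid_schedule_def by blast
  then show ?thesis
    by (meson ennreal_less_top order_le_less_trans)
qed

lemma sum_Et_ge:
  assumes valid: "valid_schedule n m s M"
    and bound: "\<And>t. ennreal c \<le> (\<Sum>e<n. det_time s M e t)"
  shows "c \<le> (\<Sum>e<n. Et s M e)"
proof -
  have step: "c \<le> (\<Sum>e<n. enn2real (det_time s M e t))" for t
  proof -
    have "(\<Sum>e<n. det_time s M e t) = ennreal (\<Sum>e<n. enn2real (det_time s M e t))"
      using det_time_less_top[OF valid] by (simp add: ennreal_enn2real sum_nonneg flip: sum_ennreal)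
    then show ?thesis
      using bound[of t] by (simp add: ennreal_le_iff sum_nonneg)
  qed
  have avg: "c \<le> (\<Sum>e<n. avg_det_seq s M e H)" if "H \<ge> 1" for H
  proof -
    have "real H * c \<le> (\<Sum>t<H. \<Sum>e<n. enn2real (det_time s M e t))"
      using sum_mono[of "{..<H}" "\<lambda>_. c", OF step] by simp
    moreover have "(\<Sum>e<n. avg_det_seq s M e H) = (\<Sum>t<H. \<Sum>e<n. enn2real (det_time s M e t)) / real H"
      unfolding avg_det_seq_def by (simp add: sum_divide_distrib[symmetric] sum.swap[of _ "{..<n}"])
    ultimately show ?thesis
      using that by (simp add: pos_le_divide_eq mult.commute)
  qed
  have "(\<lambda>H. \<Sum>e<n. avg_det_seq s M e H) \<longlonglongrightarrow> (\<Sum>e<n. Et s M e)"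
    using valid unfolding valid_schedule_def Et_def
    by (intro tendsto_sum) (simp add: convergent_LIMSEQ_iff)
  then show ?thesis
    by (rule LIMSEQ_le_const) (use avg in auto)
qed

lemma sum_obj_eq: "sum_obj n s M = (\<Sum>e<n. Et s M e) / real n"
  unfolding sum_obj_def by (simp add: sum_divide_distrib)

lemma sum_obj_le_max_obj:
  assumes "0 < n"
  shows "sum_obj n s M \<le> max_obj n s M"
proof -
  have "(\<Sum>e<n. Et s M e) \<le> (\<Sum>e<n. max_obj n s M)"
    unfolding max_obj_def by (intro sum_mono Max_ge) auto
  then show ?thesis
    unfolding sum_obj_eq using assms by (simp add: divide_le_eq mult.commute)
qed

lemma
  assumes "0 < n" and "\<And>e. e < n \<Longrightarrow> Et s M e = c"
  shows sum_obj_Et_const: "sum_obj n s M = c"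
    and max_obj_Et_const: "max_obj n s M = c"
proof -
  have "(\<lambda>e. Et s M e) ` {..<n} = {c}"
    using assms by force
  then show "max_obj n s M = c"
    unfolding max_obj_def by simp
  show "sum_obj n s M = c"
    using assms by (simp add: sum_obj_eq)
qed

section \<open>The lower bound for arbitrary schedules\<close>

lemma sum_lessThan_card_le_Sum:
  fixes B :: "nat set"
  assumes "finite B"
  shows "(\<Sum>i<card B. i) \<le> \<Sum>B"
  using assms
proof (induction "card B" arbitrary: B)
  case (Suc n)
  define m where "m = Max B"
  have "B \<noteq> {}"
    using Suc by auto
  then have "m \<in> B"
    using Suc.prems by (simp add: m_def)
  have "card B \<le> Suc m"
    using card_mono[of "{..m}" B] Suc.prems by (simp add: m_def subset_iff)
  moreover have "(\<Sum>i<n. i) \<le> \<Sum>(B - {m})"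
    using Suc.hyps(1)[of "B - {m}"] Suc.hyps(2)[symmetric] Suc.prems \<open>m \<in> B\<close> by simp
  moreover have "\<Sum>B = m + \<Sum>(B - {m})"
    using Suc.prems \<open>m \<in> B\<close> by (simp add: sum.remove)
  ultimately show ?case
    using Suc.hyps(2)[symmetric] by simp
qed simp

lemma sum_lessThan_le_sum_inj:
  fixes g :: "'a \<Rightarrow> nat"
  assumes "finite A" and "inj_on g A"
  shows "(\<Sum>i<card A. i) \<le> sum g A"
  using sum_lessThan_card_le_Sum[of "g ` A"] assms by (simp add: card_image sum.reindex)

lemma sum_hit_time_singletons_ge:
  "of_nat (\<Sum>i<k. Suc i) \<le> (\<Sum>e<k. hit_time (\<lambda>i. {i}) e t \<omega>)"
proof (cases "\<forall>e<k. \<exists>h. \<omega> (t + h) = e")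
  case True
  define g where "g e = (LEAST h. \<omega> (t + h) = e)" for e
  have g: "\<omega> (t + g e) = e" if "e < k" for e
    using True that unfolding g_def by (meson LeastI_ex)
  have hit: "hit_time (\<lambda>i. {i}) e t \<omega> = of_nat (Suc (g e))" if "e < k" for e
    using g[OF that] by (intro hit_time_eqI) (auto simp: g_def dest: not_less_Least)
  have "inj_on g {..<k}"
    by (rule inj_onI) (metis g lessThan_iff)
  then have "(\<Sum>i<k. Suc i) \<le> (\<Sum>e<k. Suc (g e))"
    using sum_lessThan_le_sum_inj[of "{..<k}" g] by (simp add: sum_Suc)
  moreover have "(\<Sum>e<k. hit_time (\<lambda>i. {i}) e t \<omega>) = of_nat (\<Sum>e<k. Suc (g e))"
    unfolding of_nat_sum by (rule sum.cong[OF refl]) (simp add: hit)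
  ultimately show ?thesis
    by (metis of_nat_mono)
next
  case False
  then obtain e where "e < k" and "\<forall>h. \<omega> (t + h) \<noteq> e"
    by auto
  moreover from this(2) have "hit_time (\<lambda>i. {i}) e t \<omega> = \<top>"
    by (auto simp: hit_time_def)
  ultimately have "(\<Sum>e<k. hit_time (\<lambda>i. {i}) e t \<omega>) = \<top>"
    using sum.remove[of "{..<k}" e "\<lambda>e. hit_time (\<lambda>i. {i}) e t \<omega>"] by simp
  then show ?thesis
    by (metis top_greatest)
qed

lemma sum_det_time_singletons_ge:
  assumes "prob_space M" and "sets M = sets seq_space"
  shows "of_nat (\<Sum>i<k. Suc i) \<le> (\<Sum>e<k. det_time (\<lambda>i. {i}) M e t)"
proof -
  have "of_nat (\<Sum>i<k. Suc i) = (\<integral>\<^sup>+\<omega>. of_nat (\<Sum>i<k. Suc i) \<partial>M)"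
    using prob_space.emeasure_space_1[OF assms(1)] by simp
  also have "\<dots> \<le> (\<integral>\<^sup>+\<omega>. (\<Sum>e<k. hit_time (\<lambda>i. {i}) e t \<omega>) \<partial>M)"
    by (intro nn_integral_mono sum_hit_time_singletons_ge)
  also have "\<dots> = (\<Sum>e<k. det_time (\<lambda>i. {i}) M e t)"
    unfolding det_time_def using assms(2) by (intro nn_integral_sum) measurable
  finally show ?thesis .
qed

lemma real_sum_lessThan_Suc: "real (\<Sum>i<k. Suc i) = real k * (real k + 1) / 2"
  by (induction k) (auto simp: field_simps)

lemma sum_obj_singletons_ge:
  assumes "valid_schedule k m (\<lambda>i. {i}) M" and "0 < k"
  shows "(real k + 1) / 2 \<le> sum_obj k (\<lambda>i. {i}) M"
proof -
  have "prob_space M" and "sets M = sets seq_space"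
    using assms(1) unfolding valid_schedule_def stoch_schedule_def by auto
  then have "real k * (real k + 1) / 2 \<le> (\<Sum>e<k. Et (\<lambda>i. {i}) M e)"
    using sum_Et_ge[OF assms(1)] sum_det_time_singletons_ge
    by (metis ennreal_of_nat_eq_real_of_nat real_sum_lessThan_Suc)
  then show ?thesis
    unfolding sum_obj_eq using assms(2) by (simp add: field_simps)
qed

section \<open>The cyclic schedule with a random phase\<close>

lemma inj_on_add_mod_lessThan: "inj_on (\<lambda>u. (a + u) mod k) {..<k}" for a k :: nat
proof (rule inj_onI)
  fix u v assume "u \<in> {..<k}" "v \<in> {..<k}" and eq: "(a + u) mod k = (a + v) mod k"
  have "k dvd (a + max u v) - (a + min u v)"
    using mod_eq_dvd_iff_nat[of "a + min u v" "a + max u v" k] eq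
    by (cases "u \<le> v") (auto simp: max_def min_def)
  then have "k dvd max u v - min u v"
    by simp
  with \<open>u \<in> _\<close> \<open>v \<in> _\<close> show "u = v"
    by (cases "u = v") (auto dest!: dvd_imp_le)
qed

lemma bij_betw_add_mod_lessThan:
  fixes a k :: nat
  assumes "0 < k"
  shows "bij_betw (\<lambda>u. (a + u) mod k) {..<k} {..<k}"
proof -
  have "(\<lambda>u. (a + u) mod k) ` {..<k} \<subseteq> {..<k}"
    using assms by auto
  then show ?thesis
    using inj_on_add_mod_lessThan[of a k]
    by (simp add: bij_betw_def card_image card_subset_eq)
qed

definition cyclic_schedule :: "nat \<Rightarrow> (nat \<Rightarrow> nat) measure" where
  "cyclic_schedule k = distr (measure_pmf (pmf_of_set {..<k})) seq_space (\<lambda>u t. (t + u) mod k)"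

lemma measurable_cyclic_phase [measurable]: "(\<lambda>u t. (t + u) mod k) \<in> measure_pmf q \<rightarrow>\<^sub>M seq_space"
  by (simp add: measurable_pmf_measure1)

lemma cyclic_first_hit_offsets:
  fixes t k e :: nat
  assumes "0 < k" and "e < k"
  obtains g where "bij_betw g {..<k} {..<k}" and "\<And>u. (t + u + g u) mod k = e"
    and "\<And>u i. i < g u \<Longrightarrow> (t + u + i) mod k \<noteq> e"
proof -
  have "\<forall>u. \<exists>h. h < k \<and> (t + u + h) mod k = e"
  proof
    fix u
    have "e \<in> (\<lambda>h. (t + u + h) mod k) ` {..<k}"
      using bij_betw_imp_surj_on[OF bij_betw_add_mod_lessThan[OF assms(1), of "t + u"]] assms(2)
      by simp
    then show "\<exists>h. h < k \<and> (t + u + h) mod k = e"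
      by auto
  qed
  then obtain g where g: "\<And>u. g u < k" "\<And>u. (t + u + g u) mod k = e"
    by metis
  have "inj_on g {..<k}"
  proof (rule inj_onI)
    fix u v assume "u \<in> {..<k}" "v \<in> {..<k}" "g u = g v"
    then have "(g u + t + u) mod k = (g u + t + v) mod k"
      using g(2)[of u] g(2)[of v] by (simp add: add_ac)
    then show "u = v"
      using inj_onD[OF inj_on_add_mod_lessThan[of "g u + t" k]] \<open>u \<in> _\<close> \<open>v \<in> _\<close> by blast
  qed
  then have "bij_betw g {..<k} {..<k}"
    using g(1) by (simp add: bij_betw_def card_image card_subset_eq image_subset_iff)
  moreover have "(t + u + i) mod k \<noteq> e" if "i < g u" for u i
  proof
    assume "(t + u + i) mod k = e"
    then have "i = g u"
      using inj_onD[OF inj_on_add_mod_lessThan[of "t + u" k], of i "g u"] g(1)[of u] g(2)[of u] that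
      by simp
    with that show False
      by simp
  qed
  ultimately show ?thesis
    using that g(2) by blast
qed

lemma sum_hit_time_cyclic:
  assumes "0 < k" and "e < k"
  shows "(\<Sum>u<k. hit_time (\<lambda>i. {i}) e t (\<lambda>t'. (t' + u) mod k)) = of_nat (\<Sum>i<k. Suc i)"
proof -
  obtain g where g: "bij_betw g {..<k} {..<k}" "\<And>u. (t + u + g u) mod k = e"
    "\<And>u i. i < g u \<Longrightarrow> (t + u + i) mod k \<noteq> e"
    using cyclic_first_hit_offsets[OF assms] by blast
  have "hit_time (\<lambda>i. {i}) e t (\<lambda>t'. (t' + u) mod k) = of_nat (Suc (g u))" for u
  proof (rule hit_time_eqI)
    show "e \<in> {(t + g u + u) mod k}"
      using g(2)[of u] by (simp add: add_ac)
    show "e \<notin> {(t + i + u) mod k}" if "i < g u" for i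
      using g(3)[OF that] by (simp add: add_ac)
  qed
  then have "(\<Sum>u<k. hit_time (\<lambda>i. {i}) e t (\<lambda>t'. (t' + u) mod k)) = (\<Sum>u<k. of_nat (Suc (g u)))"
    by simp
  also have "\<dots> = of_nat (\<Sum>i<k. Suc i)"
    unfolding of_nat_sum[symmetric] sum.reindex_bij_betw[OF g(1), of Suc] ..
  finally show ?thesis .
qed

lemma det_time_cyclic:
  assumes "0 < k" and "e < k"
  shows "det_time (\<lambda>i. {i}) (cyclic_schedule k) e t = ennreal ((real k + 1) / 2)"
proof -
  have "det_time (\<lambda>i. {i}) (cyclic_schedule k) e t
      = (\<integral>\<^sup>+u. hit_time (\<lambda>i. {i}) e t (\<lambda>t'. (t' + u) mod k) \<partial>measure_pmf (pmf_of_set {..<k}))"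
    unfolding det_time_def cyclic_schedule_def by (simp add: nn_integral_distr)
  also have "\<dots> = (\<Sum>u<k. hit_time (\<lambda>i. {i}) e t (\<lambda>t'. (t' + u) mod k)) / of_nat k"
    using assms by (subst nn_integral_pmf_of_set) auto
  also have "\<dots> = ennreal (real (\<Sum>i<k. Suc i)) / ennreal (real k)"
    unfolding sum_hit_time_cyclic[OF assms] by (simp add: ennreal_of_nat_eq_real_of_nat)
  also have "\<dots> = ennreal ((real k + 1) / 2)"
    unfolding real_sum_lessThan_Suc using assms(1) by (subst divide_ennreal) auto
  finally show ?thesis .
qed

lemma prob_cyclic_schedule_test:
  assumes "0 < k" and "i < k"
  shows "measure (cyclic_schedule k) {\<omega> \<in> space (cyclic_schedule k). \<omega> t = i} = 1 / real k"
proof -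
  let ?P = "measure_pmf (pmf_of_set {..<k})" and ?A = "{\<omega> \<in> space seq_space. \<omega> t = i}"
  have "i \<in> (\<lambda>u. (t + u) mod k) ` {..<k}"
    using bij_betw_imp_surj_on[OF bij_betw_add_mod_lessThan[OF assms(1), of t]] assms(2) by simp
  then obtain u0 where u0: "u0 < k" "(t + u0) mod k = i"
    by auto
  have "u = u0" if "u < k" "(t + u) mod k = i" for u
    using inj_onD[OF inj_on_add_mod_lessThan[of t k], of u u0] that u0 by simp
  then have phases: "{..<k} \<inter> {u. (t + u) mod k = i} = {u0}"
    using u0 by blast
  have "?A \<in> sets seq_space"
    unfolding seq_space_def by measurable
  then have "measure (cyclic_schedule k) ?A = measure ?P ((\<lambda>u t. (t + u) mod k) -` ?A \<inter> space ?P)"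
    unfolding cyclic_schedule_def by (rule measure_distr[OF measurable_cyclic_phase])
  also have "\<dots> = measure ?P {u. (t + u) mod k = i}"
    by (rule arg_cong[where f="measure ?P"]) auto
  also have "\<dots> = real (card ({..<k} \<inter> {u. (t + u) mod k = i})) / real k"
    using assms(1) by (subst measure_pmf_of_set) auto
  finally show ?thesis
    unfolding phases by (simp add: cyclic_schedule_def)
qed

lemma valid_cyclic_schedule:
  assumes "0 < k"
  shows "valid_schedule k k (\<lambda>i. {i}) (cyclic_schedule k)"
  unfolding valid_schedule_def
proof (intro conjI allI impI)
  have "Measurable.pred seq_space (\<lambda>\<omega>. \<forall>t. \<omega> t < k)"
    unfolding seq_space_def by measurable
  then have "AE \<omega> in cyclic_schedule k. \<forall>t. \<omega> t < k"
    unfolding cyclic_schedule_def using assms by (subst AE_distr_iff) (auto simp: pred_def)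
  then show "stoch_schedule k (cyclic_schedule k)"
    unfolding stoch_schedule_def cyclic_schedule_def by (simp add: measure_pmf.prob_space_distr)
next
  fix e assume "e < k"
  then show "\<exists>B::real. \<forall>t. det_time (\<lambda>i. {i}) (cyclic_schedule k) e t \<le> ennreal B"
    and "convergent (avg_det_seq (\<lambda>i. {i}) (cyclic_schedule k) e)"
    using assms det_time_cyclic by (auto intro: convergent_avg_det_seq_const)
next
  fix i assume "i < k"
  then show "convergent (test_freq_seq (cyclic_schedule k) i)"
    using prob_cyclic_schedule_test[OF assms] by (intro convergent_test_freq_seq_const)
qed

lemma Et_cyclic_schedule:
  assumes "0 < k" and "e < k"
  shows "Et (\<lambda>i. {i}) (cyclic_schedule k) e = (real k + 1) / 2"
  using assms det_time_cyclic by (intro Et_const) auto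

section \<open>Memoryless schedules\<close>

abbreviation iid_schedule :: "nat pmf \<Rightarrow> (nat \<Rightarrow> nat) measure" where
  "iid_schedule q \<equiv> PiM UNIV (\<lambda>_. measure_pmf q)"

lemma space_iid_schedule: "space (iid_schedule q) = UNIV"
  by (simp add: space_PiM)

lemma sets_iid_schedule: "sets (iid_schedule q) = sets seq_space"
  unfolding seq_space_def by (rule sets_PiM_cong) auto

lemma prob_space_iid_schedule: "prob_space (iid_schedule q)"
  by (simp add: prob_space_PiM measure_pmf.prob_space_axioms)

lemma sets_block_event: "{\<omega>. \<forall>i<j. P (\<omega> (t + i))} \<in> sets seq_space"
proof -
  have "Measurable.pred seq_space (\<lambda>\<omega>. \<forall>i<j. P (\<omega> (t + i)))"
    unfolding seq_space_def by measurable
  then show ?thesis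
    by (simp add: pred_def)
qed

lemma emeasure_iid_schedule_block:
  "emeasure (iid_schedule q) {\<omega>. \<forall>i<j. \<omega> (t + i) \<in> B} = emeasure (measure_pmf q) B ^ j"
proof -
  have "{\<omega>. \<forall>i<j. \<omega> (t + i) \<in> B} = prod_emb UNIV (\<lambda>_. measure_pmf q) {t..<t + j} (PiE {t..<t + j} (\<lambda>_. B))"
  proof -
    have "(\<forall>i<j. \<omega> (t + i) \<in> B) \<longleftrightarrow> (\<forall>x\<in>{t..<t + j}. \<omega> x \<in> B)" for \<omega> :: "nat \<Rightarrow> nat"
      by (metis atLeastLessThan_iff le_add1 le_add_diff_inverse less_diff_conv2 nat_add_left_cancel_less)
    then show ?thesis
      by (auto simp: prod_emb_def space_PiM restrict_PiE_iff Pi_iff)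
  qed
  moreover have "emeasure (iid_schedule q) (prod_emb UNIV (\<lambda>_. measure_pmf q) {t..<t + j} (PiE {t..<t + j} (\<lambda>_. B)))
      = (\<Prod>i\<in>{t..<t + j}. emeasure (measure_pmf q) B)"
    by (rule emeasure_PiM_emb) (auto simp: measure_pmf.prob_space_axioms)
  ultimately show ?thesis
    by simp
qed

text \<open>Under i.i.d. draws the hitting time is geometric with success probability
  \<open>p = q {i. e \<in> s i}\<close>; summing the tails \<open>(1 - p)\<^sup>j\<close> gives mean \<open>1 / p\<close>.\<close>

lemma det_time_iid_schedule:
  fixes q :: "nat pmf" and s :: "nat \<Rightarrow> nat set" and e :: nat
  defines "p \<equiv> measure (measure_pmf q) {i. e \<in> s i}"
  shows "det_time s (iid_schedule q) e t = (if p = 0 then \<top> else ennreal (1 / p))"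
proof -
  let ?A = "\<lambda>j. {\<omega>. \<forall>i<j. e \<notin> s (\<omega> (t + i))}"
  have A_sets: "?A j \<in> sets (iid_schedule q)" for j
    using sets_block_event[where P="\<lambda>x. e \<notin> s x"] by (simp add: sets_iid_schedule)
  have "emeasure (iid_schedule q) (?A j) = ennreal ((1 - p) ^ j)" for j
  proof -
    have "emeasure (measure_pmf q) (- {i. e \<in> s i}) = ennreal (1 - p)"
      unfolding p_def using measure_pmf.prob_compl[of "{i. e \<in> s i}" q]
      by (simp add: measure_pmf.emeasure_eq_measure Compl_eq_Diff_UNIV)
    then show ?thesis
      using emeasure_iid_schedule_block[of q j t "- {i. e \<in> s i}"]
      by (simp add: ennreal_power p_def)
  qed
  then have "det_time s (iid_schedule q) e t = (\<Sum>j. ennreal ((1 - p) ^ j))"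
    unfolding det_time_def hit_time_eq_suminf
    using A_sets by (simp add: nn_integral_suminf nn_integral_indicator)
  also have "\<dots> = (if p = 0 then \<top> else ennreal (1 / p))"
  proof (cases "p = 0")
    case False
    then have "0 < p" "p \<le> 1"
      unfolding p_def by (auto simp: order_less_le)
    then have "(\<lambda>j. (1 - p) ^ j) sums (1 / p)"
      using geometric_sums[of "1 - p"] by simp
    then have "(\<Sum>j. ennreal ((1 - p) ^ j)) = ennreal (1 / p)"
      using \<open>p \<le> 1\<close> by (intro suminf_ennreal_eq) auto
    then show ?thesis
      using False by simp
  qed (simp add: suminf_one_ennreal)
  finally show ?thesis .
qed

lemma valid_iid_schedule:
  assumes q: "set_pmf q \<subseteq> {..<m}"
    and detects: "\<And>e. e < n \<Longrightarrow> 0 < measure (measure_pmf q) {i. e \<in> s i}"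
  shows "valid_schedule n m s (iid_schedule q)"
  unfolding valid_schedule_def
proof (intro conjI allI impI)
  have "AE \<omega> in iid_schedule q. \<omega> t < m" for t
  proof -
    let ?N = "{\<omega>. \<forall>i<1. \<omega> (t + i) \<in> - {..<m}}"
    have "emeasure (measure_pmf q) (- {..<m}) = 0"
      using q by (auto simp: measure_pmf.emeasure_eq_measure measure_pmf_zero_iff)
    then have "?N \<in> null_sets (iid_schedule q)"
      using emeasure_iid_schedule_block[of q 1 t "- {..<m}"]
        sets_block_event[where P="\<lambda>x. x \<in> - {..<m}" and j=1 and t=t]
      by (simp add: null_sets_def sets_iid_schedule)
    then show ?thesis
      by (rule AE_I') auto
  qed
  then show "stoch_schedule m (iid_schedule q)"
    unfolding stoch_schedule_def
    by (simp add: prob_space_iid_schedule sets_iid_schedule AE_all_countable)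
next
  fix e assume "e < n"
  then show "\<exists>B::real. \<forall>t. det_time s (iid_schedule q) e t \<le> ennreal B"
    and "convergent (avg_det_seq s (iid_schedule q) e)"
    using detects[of e] by (auto simp: det_time_iid_schedule intro: convergent_avg_det_seq_const)
next
  fix i
  have "measure (iid_schedule q) {\<omega> \<in> space (iid_schedule q). \<omega> t = i} = enn2real (emeasure (measure_pmf q) {i} ^ 1)" for t
    using emeasure_iid_schedule_block[of q 1 t "{i}"] by (simp add: measure_def space_iid_schedule)
  then show "convergent (test_freq_seq (iid_schedule q) i)"
    by (rule convergent_test_freq_seq_const)
qed

lemma sum_inverse_ge_card_sq:
  fixes p :: "nat \<Rightarrow> real"
  assumes pos: "\<And>e. e < k \<Longrightarrow> 0 < p e" and total: "(\<Sum>e<k. p e) \<le> 1"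
  shows "real k * real k \<le> (\<Sum>e<k. 1 / p e)"
proof -
  have tangent: "2 * real k - real k * real k * p e \<le> 1 / p e" if "e < k" for e
  proof -
    have "(2 * real k - real k * real k * p e) * p e \<le> 1"
      using zero_le_power2[of "1 - real k * p e"] by (simp add: power2_eq_square algebra_simps)
    then show ?thesis
      using pos[OF that] by (simp add: le_divide_eq)
  qed
  have "real k * real k * (\<Sum>e<k. p e) \<le> real k * real k"
    using total by (simp add: mult_left_le)
  then have "2 * real k * real k - real k * real k * (\<Sum>e<k. p e) \<ge> real k * real k"
    by linarith
  also have "2 * real k * real k - real k * real k * (\<Sum>e<k. p e) = (\<Sum>e<k. 2 * real k - real k * real k * p e)"
    by (simp add: sum_subtractf sum_distrib_left)
  also have "\<dots> \<le> (\<Sum>e<k. 1 / p e)"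
    using tangent by (rule sum_mono) simp
  finally show ?thesis .
qed

lemma sum_obj_memoryless_singletons_ge:
  assumes "memoryless_schedule m M" and valid: "valid_schedule k m (\<lambda>i. {i}) M" and "0 < k"
  shows "real k \<le> sum_obj k (\<lambda>i. {i}) M"
proof -
  obtain q where M: "M = iid_schedule q"
    using assms(1) unfolding memoryless_schedule_def by blast
  have det: "det_time (\<lambda>i. {i}) M e t = (if pmf q e = 0 then \<top> else ennreal (1 / pmf q e))" for e t
    unfolding M det_time_iid_schedule by (simp add: measure_pmf_single)
  have pos: "0 < pmf q e" if "e < k" for e
  proof (rule ccontr)
    assume "\<not> 0 < pmf q e"
    then have "det_time (\<lambda>i. {i}) M e 0 = \<top>"
      using pmf_nonneg[of q e] by (simp add: det)
    with det_time_less_top[OF valid that, where t=0] show False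
      by simp
  qed
  have "(\<Sum>e<k. pmf q e) \<le> 1"
    using measure_measure_pmf_finite[of "{..<k}" q] measure_pmf.prob_le_1[of q "{..<k}"] by simp
  then have "real k * real k \<le> (\<Sum>e<k. 1 / pmf q e)"
    using pos by (rule sum_inverse_ge_card_sq[rotated])
  also have "\<dots> = (\<Sum>e<k. Et (\<lambda>i. {i}) M e)"
  proof (rule sum.cong[OF refl])
    fix e assume "e \<in> {..<k}"
    then show "1 / pmf q e = Et (\<lambda>i. {i}) M e"
      using pos[of e] by (intro Et_const[symmetric]) (simp_all add: det)
  qed
  finally show ?thesis
    unfolding sum_obj_eq using assms(3) by (simp add: le_divide_eq)
qed

lemma
  assumes "0 < k"
  shows memoryless_uniform_schedule: "memoryless_schedule k (iid_schedule (pmf_of_set {..<k}))"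
    and valid_uniform_schedule: "valid_schedule k k (\<lambda>i. {i}) (iid_schedule (pmf_of_set {..<k}))"
    and Et_uniform_schedule: "\<And>e. e < k \<Longrightarrow> Et (\<lambda>i. {i}) (iid_schedule (pmf_of_set {..<k})) e = real k"
proof -
  have "{..<k} \<noteq> {}"
    using assms by auto
  then have pmf: "measure (measure_pmf (pmf_of_set {..<k})) {i. e \<in> {i}} = 1 / real k" if "e < k" for e
    using that by (simp add: measure_pmf_single)
  show "memoryless_schedule k (iid_schedule (pmf_of_set {..<k}))"
    unfolding memoryless_schedule_def using \<open>{..<k} \<noteq> {}\<close>
    by (intro exI[of _ "pmf_of_set {..<k}"]) simp
  show "valid_schedule k k (\<lambda>i. {i}) (iid_schedule (pmf_of_set {..<k}))"
    using \<open>{..<k} \<noteq> {}\<close> assms pmf by (intro valid_iid_schedule) auto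
  show "Et (\<lambda>i. {i}) (iid_schedule (pmf_of_set {..<k})) e = real k" if "e < k" for e
    using assms pmf[OF that] by (intro Et_const) (auto simp: det_time_iid_schedule)
qed

lemma Inf_objective_eqI:
  assumes "P M\<^sub>0" and "f M\<^sub>0 = c" and "\<And>M. P M \<Longrightarrow> c \<le> f M"
  shows "Inf {ereal (f M) | M. P M} = ereal c"
proof (rule cInf_eq_minimum)
  show "ereal c \<in> {ereal (f M) | M. P M}"
    using assms(1,2) by force
qed (use assms(3) in auto)

lemma opt_values_singletons:
  assumes k: "0 < k"
  shows "opt_SUM k k (\<lambda>i. {i}) = ereal ((real k + 1) / 2)"
    and "opt_MAX k k (\<lambda>i. {i}) = ereal ((real k + 1) / 2)"
    and "optM_SUM k k (\<lambda>i. {i}) = ereal (real k)"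
    and "optM_MAX k k (\<lambda>i. {i}) = ereal (real k)"
proof -
  let ?s = "\<lambda>i::nat. {i::nat}" and ?U = "iid_schedule (pmf_of_set {..<k})"
  have max_ge_sum: "c \<le> max_obj k ?s M" if "c \<le> sum_obj k ?s M" for c M
    using that sum_obj_le_max_obj[OF k] by (rule order_trans)
  show "opt_SUM k k ?s = ereal ((real k + 1) / 2)"
    unfolding opt_SUM_def using valid_cyclic_schedule[OF k]
  proof (rule Inf_objective_eqI)
    show "sum_obj k ?s (cyclic_schedule k) = (real k + 1) / 2"
      by (intro sum_obj_Et_const[OF k] Et_cyclic_schedule[OF k])
  qed (use sum_obj_singletons_ge k in blast)
  show "opt_MAX k k ?s = ereal ((real k + 1) / 2)"
    unfolding opt_MAX_def using valid_cyclic_schedule[OF k]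
  proof (rule Inf_objective_eqI)
    show "max_obj k ?s (cyclic_schedule k) = (real k + 1) / 2"
      by (intro max_obj_Et_const[OF k] Et_cyclic_schedule[OF k])
  qed (use max_ge_sum sum_obj_singletons_ge k in blast)
  have uniform: "memoryless_schedule k ?U \<and> valid_schedule k k ?s ?U"
    using memoryless_uniform_schedule[OF k] valid_uniform_schedule[OF k] ..
  show "optM_SUM k k ?s = ereal (real k)"
    unfolding optM_SUM_def using uniform
  proof (rule Inf_objective_eqI)
    show "sum_obj k ?s ?U = real k"
      by (intro sum_obj_Et_const[OF k] Et_uniform_schedule[OF k])
  qed (use sum_obj_memoryless_singletons_ge k in blast)
  show "optM_MAX k k ?s = ereal (real k)"
    unfolding optM_MAX_def using uniform
  proof (rule Inf_objective_eqI)
    show "max_obj k ?s ?U = real k"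
      by (intro max_obj_Et_const[OF k] Et_uniform_schedule[OF k])
  qed (use max_ge_sum sum_obj_memoryless_singletons_ge k in blast)
qed

theorem lemma6:
  fixes \<epsilon> :: real
  assumes "\<epsilon> > 0"
  shows "\<exists>n m s. is_instance n m s \<and>
           opt_SUM n m s < \<infinity> \<and> optM_SUM n m s < \<infinity> \<and>
           optM_MAX n m s = optM_SUM n m s \<and>
           optM_SUM n m s \<ge> ereal (2 - \<epsilon>) * opt_MAX n m s \<and>
           opt_MAX n m s = opt_SUM n m s"
proof -
  define k where "k = nat \<lceil>2 / \<epsilon>\<rceil> + 1"
  have "0 < k"
    unfolding k_def by simp
  have "2 / \<epsilon> \<le> real k"
    unfolding k_def by linarith
  then have "(2 - \<epsilon>) * ((real k + 1) / 2) \<le> real k"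
    using assms by (simp add: divide_le_eq field_simps)
  moreover have "is_instance k k (\<lambda>i. {i})"
    unfolding is_instance_def using \<open>0 < k\<close> by auto
  ultimately show ?thesis
    using opt_values_singletons[OF \<open>0 < k\<close>]
    by (intro exI[where x=k] exI[where x="\<lambda>i::nat. {i::nat}"]) simp
qed

end
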